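(* Let $X$ be a set, $T:X\to X$ a map, and $G$ a finite group acting on $X$ such that $g\circ T=T\circ g$ for all $g\in G$. Let $H\leqslant G$ and let $x\in X_{[H]}$ be a periodic point of $T$. Then there exists $k\in\Delta(N_G(H)/H)$ such that (i) $\mathfrak{O}_T(x)$ shortens in length by a factor of $\frac1k$, and (ii) $\mathfrak{O}_T(x)$ glues to $\frac{[G:H]}{k}$ orbits (including itself).
   Context: For $x\in X$, $\mathfrak{O}_T(x)=\{T^j(x):j\geqslant0\}$ and $\mathfrak{O}_G(x)=\{g(x):g\in G\}$. $G_x=\{g\in G:g(x)=x\}$ is the stabilizer of $x$; $N_G(H)=\{g\in G: gHg^{-1}=H\}$ is the normalizer; $[H]=\{gHg^{-1}:g\in G\}$ is the conjugacy class of $H$; $X_{[H]}=\{x\in X: G_x\in[H]\}$. For a finite group $K$, $\Delta(K)=\{|\langle h\rangle|: h\in K\}$ is the set of orders of elements of $K$. Let $X'=G\backslash X$, $\pi(x)=\mathfrak{O}_G(x)$, and $T'(\mathfrak{O}_G(x))=\mathfrak{O}_G(T(x))$ the induced map. "$\mathfrak{O}_T(x)$ shortens in length by a factor of $\frac1k$" means $|\mathfrak{O}_{T'}(\pi(x))|=\frac1k|\mathfrak{O}_T(x)|$. "$\mathfrak{O}_T(x)$ glues to $m$ orbits (including itself)" means there are exactly $m$ distinct closed $T$-orbits $\mathfrak{O}_T(y)$ with $\pi(\mathfrak{O}_T(y))=\pi(\mathfrak{O}_T(x))$. *)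

theory Defs
  imports "HOL-Algebra.Algebra"
begin

definition T_orbit :: "('a \<Rightarrow> 'a) \<Rightarrow> 'a \<Rightarrow> 'a set" where
  "T_orbit T x = {(T ^^ j) x | j. True}"

definition periodic_pt :: "('a \<Rightarrow> 'a) \<Rightarrow> 'a \<Rightarrow> bool" where
  "periodic_pt T x \<longleftrightarrow> (\<exists>n>0. (T ^^ n) x = x)"

definition Delta :: "('b, 'c) monoid_scheme \<Rightarrow> nat set" where
  "Delta K = {group.ord K h | h. h \<in> carrier K}"

text \<open>The quotient map pi(x) = O_G(x) and the induced map T' on G-orbits:
  T'(O_G(y)) = O_G(T y) for y in X (well defined when T commutes with the action).\<close>
definition induced_map :: "('g, 'm) monoid_scheme \<Rightarrow> ('g \<Rightarrow> 'a \<Rightarrow> 'a) \<Rightarrow> 'a set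
    \<Rightarrow> ('a \<Rightarrow> 'a) \<Rightarrow> 'a set \<Rightarrow> 'a set" where
  "induced_map Gr \<phi> S T Ob = orbit Gr \<phi> (T (SOME y. y \<in> S \<and> Ob = orbit Gr \<phi> y))"

end

theory Submission
  imports Defs
begin

text \<open>
  Let \<open>n\<close> be the period of \<open>x\<close> under \<open>T\<close> and \<open>m\<close> the period of its \<open>G\<close>-orbit under the
  induced map; then \<open>m\<close> divides \<open>n\<close>, and \<open>k = n / m\<close> is the shortening factor. A point
  \<open>T\<^sup>j x\<close> lies in \<open>G x\<close> exactly when \<open>m\<close> divides \<open>j\<close>, so each \<open>T\<close>-orbit glued to that of \<open>x\<close>
  meets \<open>G x\<close> in \<open>k\<close> points; these orbits partition \<open>G x\<close>, which has \<open>[G : H]\<close> elements by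
  the orbit-stabilizer theorem. Finally, if \<open>T\<^sup>m x = a x\<close>, then \<open>a\<close> normalises the stabilizer
  \<open>g H g\<inverse>\<close> of \<open>x\<close> and \<open>a\<^sup>j\<close> stabilizes \<open>x\<close> iff \<open>k\<close> divides \<open>j\<close>; so \<open>g\<inverse> a g\<close> gives an element
  of order \<open>k\<close> in \<open>N\<^sub>G(H) / H\<close>.
\<close>

\<comment> \<open>The ASCII multiset notation \<open><#\<close> would otherwise make every left coset \<open>g <# H\<close> ambiguous.\<close>
no_notation (ASCII) subset_mset (infix \<open><#\<close> 50)

section \<open>Periods of points under iteration\<close>

\<comment> \<open>Only meaningful at periodic points; elsewhere \<open>LEAST\<close> of the empty set is unspecified.\<close>
definition period :: "('a \<Rightarrow> 'a) \<Rightarrow> 'a \<Rightarrow> nat" where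
  "period T x = (LEAST n. 0 < n \<and> (T ^^ n) x = x)"

lemma funpow_mult_fixpoint: "(T ^^ n) x = x \<Longrightarrow> (T ^^ (n * q)) x = x"
  by (induction q) (simp_all add: funpow_add)

lemma
  assumes "periodic_pt T x"
  shows period_pos: "0 < period T x" and funpow_period: "(T ^^ period T x) x = x"
proof -
  have "\<exists>n. 0 < n \<and> (T ^^ n) x = x" using assms unfolding periodic_pt_def by blast
  from LeastI_ex[OF this] show "0 < period T x" "(T ^^ period T x) x = x"
    unfolding period_def by auto
qed

lemma funpow_mod_period:
  assumes "periodic_pt T x"
  shows "(T ^^ (j mod period T x)) x = (T ^^ j) x"
proof -
  let ?p = "period T x"
  have "(T ^^ j) x = (T ^^ (j mod ?p + ?p * (j div ?p))) x" by simp
  also have "\<dots> = (T ^^ (j mod ?p)) ((T ^^ (?p * (j div ?p))) x)" by (simp only: funpow_add comp_apply)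
  also have "\<dots> = (T ^^ (j mod ?p)) x" using funpow_mult_fixpoint[OF funpow_period[OF assms]] by simp
  finally show ?thesis by simp
qed

lemma funpow_eq_self_iff_period_dvd:
  assumes "periodic_pt T x"
  shows "(T ^^ j) x = x \<longleftrightarrow> period T x dvd j"
proof
  let ?p = "period T x"
  assume "(T ^^ j) x = x"
  then have "(T ^^ (j mod ?p)) x = x" using funpow_mod_period[OF assms] by simp
  then have "\<not> 0 < j mod ?p"
    using Least_le[where P = "\<lambda>n. 0 < n \<and> (T ^^ n) x = x" and k = "j mod ?p"] period_pos[OF assms]
    unfolding period_def by (metis mod_less_divisor not_le)
  then show "?p dvd j" by (simp add: mod_0_imp_dvd)
next
  assume "period T x dvd j"
  then show "(T ^^ j) x = x" using funpow_mult_fixpoint[OF funpow_period[OF assms]] by auto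
qed

lemma funpow_cancel_periodic:
  assumes "0 < p" "(T ^^ p) u = u" "(T ^^ p) v = v" "(T ^^ j) u = (T ^^ j) v"
  shows "u = v"
proof -
  have "w = (T ^^ (p * j - j)) ((T ^^ j) w)" if "(T ^^ p) w = w" for w
  proof -
    have "(T ^^ (p * j - j)) ((T ^^ j) w) = (T ^^ (p * j - j + j)) w" by (simp add: funpow_add)
    also have "\<dots> = (T ^^ (p * j)) w" using \<open>0 < p\<close> by simp
    finally show ?thesis using funpow_mult_fixpoint[OF that] by simp
  qed
  then show ?thesis using assms by metis
qed

lemma funpow_fixpoint_funpow:
  assumes "(T ^^ p) x = x"
  shows "(T ^^ p) ((T ^^ j) x) = (T ^^ j) x"
proof -
  have "(T ^^ p) ((T ^^ j) x) = (T ^^ (p + j)) x" by (simp add: funpow_add)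
  also have "\<dots> = (T ^^ (j + p)) x" by (simp add: add.commute)
  also have "\<dots> = (T ^^ j) x" using assms by (simp add: funpow_add)
  finally show ?thesis .
qed

lemma funpow_eq_iff_mod_period:
  assumes "periodic_pt T x"
  shows "(T ^^ i) x = (T ^^ j) x \<longleftrightarrow> i mod period T x = j mod period T x"
proof -
  let ?p = "period T x"
  have ordered: "(T ^^ i) x = (T ^^ j) x \<longleftrightarrow> i mod ?p = j mod ?p" if "i \<le> j" for i j
  proof
    assume "(T ^^ i) x = (T ^^ j) x"
    then have "(T ^^ i) x = (T ^^ i) ((T ^^ (j - i)) x)" using \<open>i \<le> j\<close> funpow_add[of i "j - i" T] by simp
    then have "x = (T ^^ (j - i)) x"
      using funpow_cancel_periodic[OF period_pos[OF assms] funpow_period[OF assms]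
          funpow_fixpoint_funpow[OF funpow_period[OF assms]]] by blast
    then have "?p dvd j - i" using funpow_eq_self_iff_period_dvd[OF assms, of "j - i"] by simp
    then show "i mod ?p = j mod ?p" using mod_eq_dvd_iff_nat[OF \<open>i \<le> j\<close>] by (simp add: eq_commute)
  next
    assume "i mod ?p = j mod ?p"
    then show "(T ^^ i) x = (T ^^ j) x"
      using funpow_mod_period[OF assms, of i] funpow_mod_period[OF assms, of j] by simp
  qed
  show ?thesis
  proof (cases "i \<le> j")
    case False
    then show ?thesis using ordered[of j i] by auto
  qed (rule ordered)
qed

lemma self_in_T_orbit: "x \<in> T_orbit T x"
  unfolding T_orbit_def by (auto intro: exI[of _ 0])

lemma T_orbit_eq_range: "T_orbit T x = range (\<lambda>j. (T ^^ j) x)"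
  unfolding T_orbit_def by auto

lemma T_orbit_periodic:
  assumes "periodic_pt T x"
  shows "T_orbit T x = (\<lambda>j. (T ^^ j) x) ` {..<period T x}"
  unfolding T_orbit_def using funpow_mod_period[OF assms] period_pos[OF assms]
  by (auto intro!: image_eqI[of _ _ "_ mod period T x"])

lemma card_T_orbit:
  assumes "periodic_pt T x"
  shows "card (T_orbit T x) = period T x"
  unfolding T_orbit_periodic[OF assms]
  by (subst card_image) (auto simp: inj_on_def funpow_eq_iff_mod_period[OF assms])

lemma card_funpow_multiples:
  assumes "periodic_pt T x" and "d dvd period T x"
  shows "card {(T ^^ j) x | j. d dvd j} * d = period T x"
proof -
  obtain k where p: "period T x = d * k" using assms(2) by blast
  then have "0 < d" "0 < k" using period_pos[OF assms(1)] by auto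
  have "{(T ^^ j) x | j. d dvd j} = (\<lambda>i. (T ^^ (d * i)) x) ` {..<k}"
  proof (intro equalityI subsetI)
    fix y assume "y \<in> {(T ^^ j) x | j. d dvd j}"
    then obtain i where "y = (T ^^ (d * i)) x" by blast
    then have "y = (T ^^ (d * (i mod k))) x"
      using funpow_mod_period[OF assms(1), of "d * i"] by (simp add: p mod_mult_mult1)
    moreover have "i mod k < k" using \<open>0 < k\<close> by simp
    ultimately show "y \<in> (\<lambda>i. (T ^^ (d * i)) x) ` {..<k}" by blast
  qed auto
  moreover have inj: "inj_on (\<lambda>i. (T ^^ (d * i)) x) {..<k}"
  proof (rule inj_onI)
    fix i i' assume "i \<in> {..<k}" "i' \<in> {..<k}" "(T ^^ (d * i)) x = (T ^^ (d * i')) x"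
    then show "i = i'"
      using \<open>0 < d\<close> funpow_eq_iff_mod_period[OF assms(1)] by (simp add: p mod_mult_mult1)
  qed
  ultimately show ?thesis using card_image[OF inj] p by simp
qed

lemma T_orbit_funpow:
  assumes "periodic_pt T x"
  shows "T_orbit T ((T ^^ j) x) = T_orbit T x"
proof (intro equalityI subsetI)
  fix y assume "y \<in> T_orbit T ((T ^^ j) x)"
  then obtain i where "y = (T ^^ (i + j)) x" unfolding T_orbit_def by (auto simp: funpow_add)
  then show "y \<in> T_orbit T x" unfolding T_orbit_def by blast
next
  let ?p = "period T x"
  fix y assume "y \<in> T_orbit T x"
  then obtain i where y: "y = (T ^^ i) x" unfolding T_orbit_def by blast
  obtain q where q: "?p = Suc q" using period_pos[OF assms] gr0_implies_Suc by blast
  have "(T ^^ (i + q * j)) ((T ^^ j) x) = (T ^^ (i + q * j + j)) x"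
    by (simp only: funpow_add comp_apply)
  also have "\<dots> = (T ^^ (i + ?p * j)) x" using q by (simp add: algebra_simps)
  also have "\<dots> = (T ^^ i) ((T ^^ (?p * j)) x)" by (simp only: funpow_add comp_apply)
  also have "\<dots> = y"
    using y funpow_mult_fixpoint[OF funpow_period[OF assms]] by simp
  finally show "y \<in> T_orbit T ((T ^^ j) x)" unfolding T_orbit_def by blast
qed

lemma T_orbits_disjoint:
  assumes "periodic_pt T x" "periodic_pt T y" "T_orbit T x \<noteq> T_orbit T y"
  shows "T_orbit T x \<inter> T_orbit T y = {}"
proof (rule ccontr)
  assume "T_orbit T x \<inter> T_orbit T y \<noteq> {}"
  then obtain i j where "(T ^^ i) x = (T ^^ j) y" unfolding T_orbit_def by blast
  then show False using assms T_orbit_funpow by metis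
qed

section \<open>Conjugate subgroups, stabilizers and normalizers\<close>

lemma (in group) conjugate_eq_image:
  "g \<in> carrier G \<Longrightarrow> g <# H #> inv g = (\<lambda>h. g \<otimes> h \<otimes> inv g) ` H"
  unfolding l_coset_def r_coset_def by auto

lemma (in group) mem_conjugate_iff:
  assumes "g \<in> carrier G" "u \<in> carrier G" "H \<subseteq> carrier G"
  shows "u \<in> g <# H #> inv g \<longleftrightarrow> inv g \<otimes> u \<otimes> g \<in> H"
proof
  assume "u \<in> g <# H #> inv g"
  then obtain h where "h \<in> H" "u = g \<otimes> h \<otimes> inv g" using assms(1) conjugate_eq_image by auto
  moreover have "u = g \<otimes> (inv g \<otimes> u \<otimes> g) \<otimes> inv g" using assms conjugation_is_surj by simp
  ultimately show "inv g \<otimes> u \<otimes> g \<in> H" using assms conjugation_is_inj by (metis inv_closed m_closed subsetD)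
next
  assume "inv g \<otimes> u \<otimes> g \<in> H"
  then show "u \<in> g <# H #> inv g"
    unfolding conjugate_eq_image[OF assms(1)] using conjugation_is_surj[OF assms(1,2)] by (metis image_eqI)
qed

lemma (in group) card_conjugate:
  assumes "g \<in> carrier G" "H \<subseteq> carrier G"
  shows "card (g <# H #> inv g) = card H"
  unfolding conjugate_eq_image[OF assms(1)] using assms conjugation_is_inj
  by (intro card_image inj_onI) blast

lemma (in group) conjugate_pow:
  assumes "a \<in> carrier G" "g \<in> carrier G"
  shows "(inv g \<otimes> a \<otimes> g) [^] (j::nat) = inv g \<otimes> a [^] j \<otimes> g"
proof (induction j)
  case 0
  then show ?case using assms by (simp add: m_assoc)
next
  case (Suc j)
  then show ?case using assms by (simp add: m_assoc) (simp add: m_assoc[symmetric])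
qed

lemma (in group) mem_normalizer_iff:
  "H \<subseteq> carrier G \<Longrightarrow> u \<in> normalizer G H \<longleftrightarrow> u \<in> carrier G \<and> u <# H #> inv u = H"
  unfolding normalizer_def stabilizer_def by auto

lemma (in group_action) act_closed: "g \<in> carrier G \<Longrightarrow> y \<in> E \<Longrightarrow> \<phi> g y \<in> E"
  using element_image by blast

lemma (in group_action) orbit_subset: "y \<in> E \<Longrightarrow> orbit G \<phi> y \<subseteq> E"
  unfolding orbit_def using act_closed by blast

lemma (in group_action) orbit_act:
  assumes g: "g \<in> carrier G" and y: "y \<in> E"
  shows "orbit G \<phi> (\<phi> g y) = orbit G \<phi> y"
proof -
  have gy: "\<phi> g y \<in> E" "\<phi> g y \<in> orbit G \<phi> y"
    using act_closed[OF g y] g unfolding orbit_def by auto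
  show ?thesis
  proof (intro equalityI subsetI)
    fix w assume "w \<in> orbit G \<phi> (\<phi> g y)"
    then show "w \<in> orbit G \<phi> y" using orbit_trans[OF y gy(1) _ gy(2)] orbit_subset[OF gy(1)] by blast
  next
    fix w assume "w \<in> orbit G \<phi> y"
    then show "w \<in> orbit G \<phi> (\<phi> g y)"
      using orbit_trans[OF gy(1) y _ orbit_sym[OF y gy]] orbit_subset[OF y] by blast
  qed
qed

lemma (in group_action) orbit_eq_iff_mem:
  assumes "y \<in> E" "z \<in> E"
  shows "orbit G \<phi> z = orbit G \<phi> y \<longleftrightarrow> z \<in> orbit G \<phi> y"
proof
  show "orbit G \<phi> z = orbit G \<phi> y \<Longrightarrow> z \<in> orbit G \<phi> y" using orbit_refl[OF assms(2)] by simp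
next
  assume "z \<in> orbit G \<phi> y"
  then obtain g where "g \<in> carrier G" "z = \<phi> g y" unfolding orbit_def by blast
  then show "orbit G \<phi> z = orbit G \<phi> y" using orbit_act assms(1) by simp
qed

lemma (in group_action) stabilizer_act_iff:
  assumes g: "g \<in> carrier G" and u: "u \<in> carrier G" and y: "y \<in> E"
  shows "u \<in> stabilizer G \<phi> (\<phi> g y) \<longleftrightarrow> inv g \<otimes> u \<otimes> g \<in> stabilizer G \<phi> y"
proof -
  interpret group G using group_hom group_hom.axioms(1) by blast
  have inv_act_eq: "\<phi> (inv g) w = y \<longleftrightarrow> w = \<phi> g y" if "w \<in> E" for w
  proof
    assume "\<phi> (inv g) w = y"
    then show "w = \<phi> g y" using orbit_sym_aux[of "inv g" w y] that g by simp
  qed (use orbit_sym_aux[OF g y] in simp)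
  have "inv g \<otimes> u \<otimes> g \<in> stabilizer G \<phi> y \<longleftrightarrow> \<phi> (inv g \<otimes> u \<otimes> g) y = y"
    using g u unfolding stabilizer_def by simp
  also have "\<phi> (inv g \<otimes> u \<otimes> g) y = \<phi> (inv g) (\<phi> u (\<phi> g y))"
    using g u y act_closed[OF g y] by (simp add: composition_rule)
  also have "\<dots> = y \<longleftrightarrow> \<phi> u (\<phi> g y) = \<phi> g y"
    using inv_act_eq act_closed[OF u act_closed[OF g y]] by simp
  also have "\<dots> \<longleftrightarrow> u \<in> stabilizer G \<phi> (\<phi> g y)"
    using u unfolding stabilizer_def by simp
  finally show ?thesis by simp
qed

lemma (in group_action) stabilizer_act:
  assumes "g \<in> carrier G" "y \<in> E"
  shows "stabilizer G \<phi> (\<phi> g y) = g <# stabilizer G \<phi> y #> inv g"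
proof -
  interpret group G using group_hom group_hom.axioms(1) by blast
  have "g <# stabilizer G \<phi> y #> inv g \<subseteq> carrier G"
    using assms(1) stabilizer_subset by (simp add: l_coset_subset_G r_coset_subset_G)
  then show ?thesis
    using stabilizer_act_iff[OF assms(1) _ assms(2)] mem_conjugate_iff[OF assms(1) _ stabilizer_subset]
      stabilizer_subset by blast
qed

lemma (in group_action) card_orbit_eq_card_rcosets:
  assumes "finite (carrier G)" "subgroup H G" "y \<in> E"
    and "g \<in> carrier G" "stabilizer G \<phi> y = g <# H #> inv g"
  shows "card (orbit G \<phi> y) = card (rcosets H)"
proof -
  interpret group G using group_hom group_hom.axioms(1) by blast
  have "card (stabilizer G \<phi> y) = card H"
    using assms(4,5) card_conjugate subgroup.subset[OF assms(2)] by simp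
  then have "card (orbit G \<phi> y) * card H = card (rcosets H) * card H"
    using orbit_stabilizer_theorem[OF assms(3)] lagrange[OF assms(2)] by simp
  moreover have "finite H" using finite_subset[OF subgroup.subset[OF assms(2)] assms(1)] .
  then have "0 < card H" using subgroup.one_closed[OF assms(2)] card_gt_0_iff by blast
  ultimately show ?thesis by simp
qed

lemma (in group) normalizer_conjugate_iff:
  assumes "g \<in> carrier G" "a \<in> carrier G" "H \<subseteq> carrier G"
  shows "a \<in> normalizer G (g <# H #> inv g) \<longleftrightarrow> inv g \<otimes> a \<otimes> g \<in> normalizer G H"
proof -
  note conj = action_by_conjugation_on_power_set
  have "g <# H #> inv g = (\<lambda>g. \<lambda>H \<in> {H. H \<subseteq> carrier G}. g <# H #> inv g) g H"
    using assms by simp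
  then show ?thesis
    unfolding normalizer_def using group_action.stabilizer_act_iff[OF conj] assms by simp
qed

lemma (in group) in_Delta_normalizer_quotient:
  assumes H: "subgroup H G" and h: "h \<in> normalizer G H" and pow: "\<And>j. h [^] j \<in> H \<longleftrightarrow> k dvd j"
  shows "k \<in> Delta (G\<lparr>carrier := normalizer G H\<rparr> Mod H)"
proof -
  let ?N = "G\<lparr>carrier := normalizer G H\<rparr>"
  have nrm: "H \<lhd> ?N" by (rule subgroup_in_normalizer[OF H])
  interpret Q: group "?N Mod H" by (rule normal.factorgroup_is_group[OF nrm])
  have hG: "h \<in> carrier G" using h normalizer_imp_subgroup[OF subgroup.subset[OF H]] subgroup.subset by blast
  have coset: "H #>\<^bsub>?N\<^esub> h \<in> carrier (?N Mod H)" using h by (simp add: carrier_FactGroup RCOSETS_def r_coset_def)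
  have "(H #>\<^bsub>?N\<^esub> h) [^]\<^bsub>?N Mod H\<^esub> j = H \<longleftrightarrow> k dvd j" for j
  proof -
    have "(H #>\<^bsub>?N\<^esub> h) [^]\<^bsub>?N Mod H\<^esub> j = H #> (h [^] j)"
      using normal.FactGroup_pow[OF nrm] h by (simp add: r_coset_def nat_pow_def)
    also have "H #> (h [^] j) = H \<longleftrightarrow> h [^] j \<in> H"
      using coset_join1[OF _ _ H] subgroup.rcos_const[OF H is_group] hG by blast
    finally show ?thesis using pow by simp
  qed
  then have "Q.ord (H #>\<^bsub>?N\<^esub> h) = k" using Q.ord_unique[OF coset] by simp
  then show ?thesis unfolding Delta_def using coset by blast
qed

section \<open>Maps commuting with a group action\<close>

locale equivariant_self_map = group_action G E \<phi> for G (structure) and E and \<phi> +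
  fixes T
  assumes map_closed: "y \<in> E \<Longrightarrow> T y \<in> E"
    and act_commute: "g \<in> carrier G \<Longrightarrow> y \<in> E \<Longrightarrow> \<phi> g (T y) = T (\<phi> g y)"
begin

sublocale group G using group_hom group_hom.axioms(1) by blast

abbreviation T' where "T' \<equiv> induced_map G \<phi> E T"

lemma funpow_closed: "y \<in> E \<Longrightarrow> (T ^^ j) y \<in> E"
  by (induction j) (auto simp: map_closed)

lemma funpow_act_commute: "g \<in> carrier G \<Longrightarrow> y \<in> E \<Longrightarrow> \<phi> g ((T ^^ j) y) = (T ^^ j) (\<phi> g y)"
  by (induction j) (auto simp: act_commute funpow_closed)

lemma induced_map_orbit:
  assumes "y \<in> E"
  shows "T' (orbit G \<phi> y) = orbit G \<phi> (T y)"
proof -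
  define z where "z = (SOME z. z \<in> E \<and> orbit G \<phi> y = orbit G \<phi> z)"
  have "z \<in> E \<and> orbit G \<phi> y = orbit G \<phi> z"
    unfolding z_def by (rule someI[of _ y]) (simp add: assms)
  then obtain g where g: "g \<in> carrier G" "z = \<phi> g y"
    using orbit_eq_iff_mem[OF assms] unfolding orbit_def by blast
  then have "orbit G \<phi> (T z) = orbit G \<phi> (T y)"
    using act_commute[OF g(1) assms] orbit_act[OF g(1) map_closed[OF assms]] by simp
  then show ?thesis unfolding induced_map_def z_def[symmetric] by simp
qed

lemma funpow_induced_map_orbit: "y \<in> E \<Longrightarrow> (T' ^^ j) (orbit G \<phi> y) = orbit G \<phi> ((T ^^ j) y)"
  by (induction j) (auto simp: induced_map_orbit funpow_closed)

lemma periodic_pt_induced_map: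
  assumes "y \<in> E" "periodic_pt T y"
  shows "periodic_pt T' (orbit G \<phi> y)"
proof -
  obtain n where "0 < n" "(T ^^ n) y = y" using assms(2) unfolding periodic_pt_def by blast
  then show ?thesis unfolding periodic_pt_def using funpow_induced_map_orbit[OF assms(1)] by metis
qed

lemma period_induced_map_dvd:
  assumes "y \<in> E" "periodic_pt T y"
  shows "period T' (orbit G \<phi> y) dvd period T y"
proof -
  have "(T' ^^ period T y) (orbit G \<phi> y) = orbit G \<phi> y"
    using funpow_induced_map_orbit[OF assms(1)] funpow_period[OF assms(2)] by simp
  then show ?thesis using funpow_eq_self_iff_period_dvd[OF periodic_pt_induced_map[OF assms]] by simp
qed

lemma funpow_mem_orbit_iff:
  assumes "y \<in> E" "periodic_pt T y"
  shows "(T ^^ j) y \<in> orbit G \<phi> y \<longleftrightarrow> period T' (orbit G \<phi> y) dvd j"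
proof -
  have "(T ^^ j) y \<in> orbit G \<phi> y \<longleftrightarrow> orbit G \<phi> ((T ^^ j) y) = orbit G \<phi> y"
    using orbit_eq_iff_mem[OF assms(1) funpow_closed[OF assms(1)]] by simp
  also have "\<dots> \<longleftrightarrow> (T' ^^ j) (orbit G \<phi> y) = orbit G \<phi> y"
    using funpow_induced_map_orbit[OF assms(1)] by simp
  finally show ?thesis using funpow_eq_self_iff_period_dvd[OF periodic_pt_induced_map[OF assms]] by simp
qed

lemma funpow_act_eq_self_iff:
  assumes "g \<in> carrier G" "y \<in> E"
  shows "(T ^^ j) (\<phi> g y) = \<phi> g y \<longleftrightarrow> (T ^^ j) y = y"
proof -
  have "(T ^^ j) (\<phi> g y) = \<phi> g ((T ^^ j) y)" using funpow_act_commute[OF assms] by simp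
  then show ?thesis using inj_on_eq_iff[OF inj_prop[OF assms(1)] funpow_closed[OF assms(2)] assms(2)] by simp
qed

lemma
  assumes "g \<in> carrier G" "y \<in> E" "periodic_pt T y"
  shows periodic_pt_act: "periodic_pt T (\<phi> g y)"
    and period_act: "period T (\<phi> g y) = period T y"
proof -
  show per: "periodic_pt T (\<phi> g y)"
    using assms funpow_act_eq_self_iff unfolding periodic_pt_def by blast
  have same_dvd: "period T (\<phi> g y) dvd j \<longleftrightarrow> period T y dvd j" for j
    using funpow_eq_self_iff_period_dvd[OF per] funpow_eq_self_iff_period_dvd[OF assms(3)]
      funpow_act_eq_self_iff[OF assms(1,2)] by simp
  have "period T (\<phi> g y) dvd period T y" "period T y dvd period T (\<phi> g y)"
    using same_dvd[of "period T y"] same_dvd[of "period T (\<phi> g y)"] by simp_all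
  then show "period T (\<phi> g y) = period T y" by (rule dvd_antisym)
qed

lemma stabilizer_funpow:
  assumes "y \<in> E" "periodic_pt T y"
  shows "stabilizer G \<phi> ((T ^^ j) y) = stabilizer G \<phi> y"
proof -
  have "\<phi> u ((T ^^ j) y) = (T ^^ j) y \<longleftrightarrow> \<phi> u y = y" if u: "u \<in> carrier G" for u
  proof
    assume "\<phi> u ((T ^^ j) y) = (T ^^ j) y"
    then have "(T ^^ j) (\<phi> u y) = (T ^^ j) y" using funpow_act_commute[OF u assms(1)] by simp
    moreover have "(T ^^ period T y) (\<phi> u y) = \<phi> u y"
      using funpow_act_eq_self_iff[OF u assms(1)] funpow_period[OF assms(2)] by simp
    ultimately show "\<phi> u y = y"
      using funpow_cancel_periodic period_pos[OF assms(2)] funpow_period[OF assms(2)] by metis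
  qed (simp add: funpow_act_commute[OF u assms(1)])
  then show ?thesis unfolding stabilizer_def by auto
qed

lemma card_T_orbit_inter_orbit:
  assumes "y \<in> E" "periodic_pt T y"
  shows "card (T_orbit T y \<inter> orbit G \<phi> y) * period T' (orbit G \<phi> y) = period T y"
proof -
  have "T_orbit T y \<inter> orbit G \<phi> y = {(T ^^ j) y | j. period T' (orbit G \<phi> y) dvd j}"
    unfolding T_orbit_def using funpow_mem_orbit_iff[OF assms] by blast
  then show ?thesis
    using card_funpow_multiples[OF assms(2) period_induced_map_dvd[OF assms]] by simp
qed

definition glued_T_orbits where
  "glued_T_orbits x = {Ob. \<exists>y\<in>E. periodic_pt T y \<and> Ob = T_orbit T y
                          \<and> orbit G \<phi> ` Ob = orbit G \<phi> ` T_orbit T x}"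

lemma glued_T_orbits_eq:
  assumes x: "x \<in> E" "periodic_pt T x"
  shows "glued_T_orbits x = T_orbit T ` orbit G \<phi> x"
proof (intro equalityI subsetI)
  fix Ob assume "Ob \<in> glued_T_orbits x"
  then obtain y where y: "y \<in> E" "Ob = T_orbit T y" "orbit G \<phi> ` Ob = orbit G \<phi> ` T_orbit T x"
    unfolding glued_T_orbits_def by auto
  have "y \<in> Ob" using y(2) self_in_T_orbit by simp
  then have "orbit G \<phi> y \<in> orbit G \<phi> ` T_orbit T x" using y(3) imageI[of y Ob "orbit G \<phi>"] by simp
  then obtain j where "orbit G \<phi> y = orbit G \<phi> ((T ^^ j) x)" unfolding T_orbit_eq_range by auto
  then have "y \<in> orbit G \<phi> ((T ^^ j) x)" using orbit_eq_iff_mem[OF funpow_closed[OF x(1)] y(1)] by simp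
  then obtain g where g: "g \<in> carrier G" "y = \<phi> g ((T ^^ j) x)" unfolding orbit_def by blast
  then have "Ob = T_orbit T (\<phi> g x)"
    using y(2) funpow_act_commute[OF g(1) x(1)] T_orbit_funpow[OF periodic_pt_act[OF g(1) x]] by simp
  moreover have "\<phi> g x \<in> orbit G \<phi> x" using g(1) unfolding orbit_def by blast
  ultimately show "Ob \<in> T_orbit T ` orbit G \<phi> x" by (rule image_eqI)
next
  fix Ob assume "Ob \<in> T_orbit T ` orbit G \<phi> x"
  then obtain w where "w \<in> orbit G \<phi> x" "Ob = T_orbit T w" by blast
  then obtain g where g: "g \<in> carrier G" "Ob = T_orbit T (\<phi> g x)" unfolding orbit_def by blast
  have "orbit G \<phi> ((T ^^ j) (\<phi> g x)) = orbit G \<phi> ((T ^^ j) x)" for j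
    using funpow_act_commute[OF g(1) x(1)] orbit_act[OF g(1) funpow_closed[OF x(1)]] by simp
  then have "orbit G \<phi> ` Ob = orbit G \<phi> ` T_orbit T x"
    unfolding g(2) T_orbit_eq_range image_image by simp
  then show "Ob \<in> glued_T_orbits x"
    unfolding glued_T_orbits_def
    using g(2) act_closed[OF g(1) x(1)] periodic_pt_act[OF g(1) x] by (intro CollectI bexI[of _ "\<phi> g x"]) simp_all
qed

lemma card_glued_T_orbits:
  assumes fin: "finite (carrier G)" and x: "x \<in> E" "periodic_pt T x"
  shows "card (glued_T_orbits x) * (period T x div period T' (orbit G \<phi> x)) = card (orbit G \<phi> x)"
proof -
  let ?O = "orbit G \<phi> x" and ?k = "period T x div period T' (orbit G \<phi> x)"
  have finO: "finite ?O" unfolding orbit_def using fin by (simp add: setcompr_eq_image)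
  have rep: "\<exists>g\<in>carrier G. Ob = T_orbit T (\<phi> g x)" if Ob: "Ob \<in> glued_T_orbits x" for Ob
  proof -
    obtain w where "w \<in> ?O" "Ob = T_orbit T w" using Ob unfolding glued_T_orbits_eq[OF x] by blast
    then show ?thesis unfolding orbit_def by blast
  qed
  have card_piece: "card (Ob \<inter> ?O) = ?k" if Ob: "Ob \<in> glued_T_orbits x" for Ob
  proof -
    obtain g where g: "g \<in> carrier G" "Ob = T_orbit T (\<phi> g x)" using rep[OF Ob] by blast
    have "card (Ob \<inter> ?O) * period T' ?O = period T x"
      using card_T_orbit_inter_orbit[OF act_closed[OF g(1) x(1)] periodic_pt_act[OF g(1) x]]
      unfolding g(2) orbit_act[OF g(1) x(1)] period_act[OF g(1) x] .
    moreover have "0 < period T' ?O" using period_pos[OF periodic_pt_induced_map[OF x]] .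
    ultimately show ?thesis by (metis nonzero_mult_div_cancel_right not_gr0)
  qed
  have disjoint: "(A \<inter> ?O) \<inter> (B \<inter> ?O) = {}"
    if AB: "A \<in> glued_T_orbits x" "B \<in> glued_T_orbits x" "A \<noteq> B" for A B
  proof -
    obtain g h where "g \<in> carrier G" "A = T_orbit T (\<phi> g x)" "h \<in> carrier G" "B = T_orbit T (\<phi> h x)"
      using rep[OF AB(1)] rep[OF AB(2)] by blast
    then have "A \<inter> B = {}"
      using T_orbits_disjoint[OF periodic_pt_act[OF _ x] periodic_pt_act[OF _ x]] AB(3) by simp
    then show ?thesis by blast
  qed
  have "?O = (\<Union>Ob\<in>glued_T_orbits x. Ob \<inter> ?O)"
  proof (intro equalityI subsetI)
    fix w assume w: "w \<in> ?O"
    then have "T_orbit T w \<in> glued_T_orbits x" unfolding glued_T_orbits_eq[OF x] by (rule imageI)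
    moreover have "w \<in> T_orbit T w \<inter> ?O" using w self_in_T_orbit[of w T] by blast
    ultimately show "w \<in> (\<Union>Ob\<in>glued_T_orbits x. Ob \<inter> ?O)" by (rule UN_I)
  qed blast
  also have "card \<dots> = (\<Sum>Ob\<in>glued_T_orbits x. card (Ob \<inter> ?O))"
    using finO disjoint by (intro card_UN_disjoint) (auto simp: glued_T_orbits_eq[OF x])
  also have "\<dots> = card (glued_T_orbits x) * ?k" using card_piece by simp
  finally show ?thesis by simp
qed

lemma act_pow_eq_funpow:
  assumes a: "a \<in> carrier G" and y: "y \<in> E" and d: "(T ^^ d) y = \<phi> a y"
  shows "\<phi> (a [^] j) y = (T ^^ (j * d)) y"
proof (induction j)
  case 0
  then show ?case using y by (simp flip: id_eq_one)
next
  case (Suc j)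
  have "\<phi> (a [^] Suc j) y = \<phi> (a [^] j) (\<phi> a y)"
    using a y by (simp add: composition_rule)
  also have "\<dots> = (T ^^ d) ((T ^^ (j * d)) y)"
    using d[symmetric] Suc funpow_act_commute[OF nat_pow_closed[OF a, of j] y, of d] by simp
  finally show ?case by (simp add: funpow_add)
qed

lemma shortening_factor_in_Delta:
  assumes H: "subgroup H G" and x: "x \<in> E" "periodic_pt T x"
    and g: "g \<in> carrier G" "stabilizer G \<phi> x = g <# H #> inv g"
  shows "period T x div period T' (orbit G \<phi> x) \<in> Delta (G\<lparr>carrier := normalizer G H\<rparr> Mod H)"
proof -
  define m where "m = period T' (orbit G \<phi> x)"
  define k where "k = period T x div m"
  have n: "period T x = k * m" using period_induced_map_dvd[OF x] unfolding k_def m_def by simp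
  have "0 < m" unfolding m_def using period_pos[OF periodic_pt_induced_map[OF x]] .
  obtain a where a: "a \<in> carrier G" "(T ^^ m) x = \<phi> a x"
    using funpow_mem_orbit_iff[OF x, of m] unfolding m_def orbit_def by auto
  let ?K = "stabilizer G \<phi> x"
  \<comment> \<open>\<open>a\<close> carries \<open>x\<close> to \<open>T\<^sup>m x\<close>, whose stabilizer is again \<open>K\<close>\<close>
  have "stabilizer G \<phi> (\<phi> a x) = ?K" using stabilizer_funpow[OF x, of m] a(2) by simp
  then have "a <# ?K #> inv a = ?K" using stabilizer_act[OF a(1) x(1)] by simp
  then have "a \<in> normalizer G ?K" using mem_normalizer_iff[OF stabilizer_subset] a(1) by simp
  then have "inv g \<otimes> a \<otimes> g \<in> normalizer G H"
    using normalizer_conjugate_iff[OF g(1) a(1) subgroup.subset[OF H]] g(2) by simp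
  moreover have "(inv g \<otimes> a \<otimes> g) [^] j \<in> H \<longleftrightarrow> k dvd j" for j
  proof -
    have "(inv g \<otimes> a \<otimes> g) [^] j \<in> H \<longleftrightarrow> a [^] j \<in> ?K"
      using conjugate_pow[OF a(1) g(1)] mem_conjugate_iff[OF g(1) nat_pow_closed[OF a(1)] subgroup.subset[OF H]] g(2)
      by simp
    also have "\<dots> \<longleftrightarrow> (T ^^ (j * m)) x = x"
      using act_pow_eq_funpow[OF a(1) x(1) a(2)] a(1) unfolding stabilizer_def by simp
    also have "\<dots> \<longleftrightarrow> k dvd j"
      using funpow_eq_self_iff_period_dvd[OF x(2)] n \<open>0 < m\<close> by simp
    finally show ?thesis .
  qed
  ultimately show ?thesis unfolding k_def m_def by (rule in_Delta_normalizer_quotient[OF H])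
qed

end

theorem lemma6:
  fixes G :: "('g, 'm) monoid_scheme" and E :: "'a set" and \<phi> :: "'g \<Rightarrow> 'a \<Rightarrow> 'a"
    and T :: "'a \<Rightarrow> 'a" and H :: "'g set" and x :: 'a
  assumes act: "group_action G E \<phi>"
    and fin: "finite (carrier G)"
    and T_maps: "\<forall>y\<in>E. T y \<in> E"
    and comm: "\<forall>g\<in>carrier G. \<forall>y\<in>E. \<phi> g (T y) = T (\<phi> g y)"
    and H: "subgroup H G"
    and x: "x \<in> E"
    and stab: "\<exists>g\<in>carrier G. stabilizer G \<phi> x = g <#\<^bsub>G\<^esub> H #>\<^bsub>G\<^esub> inv\<^bsub>G\<^esub> g"
    and per: "periodic_pt T x"
  shows "\<exists>k \<in> Delta ((G\<lparr>carrier := normalizer G H\<rparr>) Mod H).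
           card (T_orbit T x) = k * card (T_orbit (induced_map G \<phi> E T) (orbit G \<phi> x))
         \<and> card {Ob. \<exists>y\<in>E. periodic_pt T y \<and> Ob = T_orbit T y
                       \<and> orbit G \<phi> ` Ob = orbit G \<phi> ` T_orbit T x}
             * k = card (rcosets\<^bsub>G\<^esub> H)"
proof -
  interpret equivariant_self_map G E \<phi> T
    using act T_maps comm by (simp add: equivariant_self_map_def equivariant_self_map_axioms_def)
  obtain g where g: "g \<in> carrier G" "stabilizer G \<phi> x = g <#\<^bsub>G\<^esub> H #>\<^bsub>G\<^esub> inv\<^bsub>G\<^esub> g"
    using stab by blast
  let ?k = "period T x div period T' (orbit G \<phi> x)"
  have "card (T_orbit T x) = ?k * card (T_orbit T' (orbit G \<phi> x))"
    using card_T_orbit[OF per] card_T_orbit[OF periodic_pt_induced_map[OF x per]]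
      period_induced_map_dvd[OF x per] by simp
  moreover have "card (glued_T_orbits x) * ?k = card (rcosets\<^bsub>G\<^esub> H)"
    using card_glued_T_orbits[OF fin x per] card_orbit_eq_card_rcosets[OF fin H x g] by simp
  ultimately show ?thesis
    using shortening_factor_in_Delta[OF H x per g] unfolding glued_T_orbits_def by blast
qed

end
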